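(* Let $I$ be a non-empty finite set and, in the setting described in the context, let $n,s\in\mathbb{N}$, $k\in I$ and $r\in R$. Then the set $$E^{(r)}_{n,k,s}(I)=\{f\in A(\Omega):\operatorname{Re}(f\circ\phi_r)\restriction_{\mathbb{T}^I}\in D_{n,k,s}(I)\}$$ is an open subset of $A(\Omega)$.
   Context: For each $i\in I$, $\Omega_i\subset\mathbb{C}$ is a bounded domain whose boundary consists of $k_i$ disjoint Jordan curves; $V_{i,j}$, $j\in\{0,\dots,k_i-1\}$, are the connected components of $\hat{\mathbb{C}}\setminus\overline{\Omega_i}$, $\Omega_{i,j}=\hat{\mathbb{C}}\setminus\overline{V_{i,j}}$, and $\phi_{i,j}:\overline{D}\to\overline{\Omega_{i,j}}$ are fixed Riemann mappings (homeomorphisms of the closed unit disc onto the closure in $\hat{\mathbb{C}}$, conformal from $D$ onto $\Omega_{i,j}$). $\Omega=\prod_{i\in I}\Omega_i$, $\overline{\Omega}=\prod_{i\in I}\overline{\Omega_i}$ with the product topology. $A(\Omega)$ is the space of functions $f:\overline{\Omega}\to\mathbb{C}$ that are continuous on $\overline{\Omega}$ and separately holomorphic on $\Omega$ (holomorphic in each variable $z_{i_0}\in\Omega_{i_0}$ when the others are fixed), with the supremum norm. $R=\prod_{i\in I}\{0,\dots,k_i-1\}$, and for $r=(r_i)\in R$, $\phi_r:\overline{D}^I\to\prod_{i\in I}\overline{\Omega_{i,r_i}}$, $(z_i)\mapsto(\phi_{i,r_i}(z_i))$. Functions on $\mathbb{T}^I$ are identified with functions on $\mathbb{R}^I$ that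 are $2\pi$-periodic in each coordinate via $\theta\mapsto(e^{i\theta_j})_{j\in I}$. For $n,s\in\mathbb{N}$, $k\in I$, $D_{n,k,s}(I)$ is the set of real continuous $u$ on $\mathbb{T}^I$ such that for every $\theta\in\mathbb{R}^I$ and every $v\in\mathbb{R}^I$ with $\frac1s\le|v_k|\le s$ and $|v_j|\le s$ for all $j\in I$, there exists $y$ in the segment $\{\theta+tv:-\frac1n<t<\frac1n\}$ with $|u(\theta)-u(y)|>n\|y-\theta\|_\infty$. *)

theory Defs
  imports "HOL-Analysis.Analysis"
begin

definition jordan_curve :: "(real \<Rightarrow> complex) \<Rightarrow> bool" where
  "jordan_curve g \<longleftrightarrow> simple_path g \<and> pathfinish g = pathstart g"

definition boundary_jordan :: "complex set \<Rightarrow> nat \<Rightarrow> bool" where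
  "boundary_jordan U m \<longleftrightarrow>
     (\<exists>\<gamma> :: nat \<Rightarrow> real \<Rightarrow> complex.
        (\<forall>j<m. jordan_curve (\<gamma> j)) \<and>
        (\<forall>j<m. \<forall>j'<m. j \<noteq> j' \<longrightarrow> path_image (\<gamma> j) \<inter> path_image (\<gamma> j') = {}) \<and>
        frontier U = (\<Union>j<m. path_image (\<gamma> j)))"

definition jordan_domain :: "complex set \<Rightarrow> nat \<Rightarrow> bool" where
  "jordan_domain U m \<longleftrightarrow> open U \<and> connected U \<and> U \<noteq> {} \<and> bounded U \<and> boundary_jordan U m"

text \<open>Riemann map phi from the closed unit disc onto the closure (in the Riemann sphere) of
  Omega_V = Riemann sphere minus closure(V_hat), where V is the finite part of the component
  V_hat of the complement of closure(Omega_i) in the Riemann sphere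
  (V_hat = V if V is bounded, V_hat = V plus infinity otherwise).
  If V is bounded, infinity lies in Omega_V, and phi takes the value infinity at exactly one
  point a of the open disc; this is encoded by phi tending to infinity at a, phi being
  holomorphic and injective off a.  The value of phi at a itself is irrelevant.\<close>
definition riemann_map_ext :: "complex set \<Rightarrow> (complex \<Rightarrow> complex) \<Rightarrow> bool" where
  "riemann_map_ext V \<phi> \<longleftrightarrow>
     (if bounded V then
        (\<exists>a\<in>ball 0 1.
           \<phi> holomorphic_on (ball 0 1 - {a}) \<and>
           continuous_on (cball 0 1 - {a}) \<phi> \<and>
           inj_on \<phi> (cball 0 1 - {a}) \<and>
           \<phi> ` (ball 0 1 - {a}) = - closure V \<and>
           \<phi> ` (cball 0 1 - {a}) = closure (- closure V) \<and>
           filterlim \<phi> at_infinity (at a))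
      else
        \<phi> holomorphic_on ball 0 1 \<and>
        continuous_on (cball 0 1) \<phi> \<and>
        inj_on \<phi> (cball 0 1) \<and>
        \<phi> ` ball 0 1 = - closure V \<and>
        \<phi> ` cball 0 1 = closure (- closure V))"

definition setting ::
  "'i set \<Rightarrow> ('i \<Rightarrow> complex set) \<Rightarrow> ('i \<Rightarrow> nat) \<Rightarrow> ('i \<Rightarrow> nat \<Rightarrow> complex set)
   \<Rightarrow> ('i \<Rightarrow> nat \<Rightarrow> complex \<Rightarrow> complex) \<Rightarrow> bool" where
  "setting I \<Omega> K V \<phi> \<longleftrightarrow>
     (\<forall>i\<in>I. jordan_domain (\<Omega> i) (K i) \<and>
             bij_betw (V i) {..<K i} (components (- closure (\<Omega> i))) \<and>
             (\<forall>j<K i. riemann_map_ext (V i j) (\<phi> i j)))"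

definition cl_prod :: "'i set \<Rightarrow> ('i \<Rightarrow> complex set) \<Rightarrow> ('i \<Rightarrow> complex) set" where
  "cl_prod I \<Omega> = (\<Pi>\<^sub>E i\<in>I. closure (\<Omega> i))"

definition A_space :: "'i set \<Rightarrow> ('i \<Rightarrow> complex set) \<Rightarrow> (('i \<Rightarrow> complex) \<Rightarrow> complex) set" where
  "A_space I \<Omega> = {f. continuous_on (cl_prod I \<Omega>) f \<and>
      (\<forall>z\<in>(\<Pi>\<^sub>E i\<in>I. \<Omega> i). \<forall>i0\<in>I. (\<lambda>\<zeta>. f (z(i0 := \<zeta>))) holomorphic_on \<Omega> i0)}"

definition sup_dist :: "('i \<Rightarrow> complex) set \<Rightarrow> (('i \<Rightarrow> complex) \<Rightarrow> complex) \<Rightarrow> (('i \<Rightarrow> complex) \<Rightarrow> complex) \<Rightarrow> real" where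
  "sup_dist X f g = (SUP z\<in>X. cmod (f z - g z))"

definition torus :: "'i set \<Rightarrow> ('i \<Rightarrow> complex) set" where
  "torus I = (\<Pi>\<^sub>E i\<in>I. sphere 0 1)"

definition expI :: "'i set \<Rightarrow> ('i \<Rightarrow> real) \<Rightarrow> ('i \<Rightarrow> complex)" where
  "expI I \<theta> = (\<lambda>j\<in>I. exp (\<i> * complex_of_real (\<theta> j)))"

text \<open>D_{n,k,s}(I): real continuous functions on T^I (viewed as periodic functions on R^I).\<close>
definition D_set :: "nat \<Rightarrow> 'i \<Rightarrow> nat \<Rightarrow> 'i set \<Rightarrow> (('i \<Rightarrow> complex) \<Rightarrow> real) set" where
  "D_set n k s I = {u. continuous_on (torus I) u \<and>
     (\<forall>\<theta> v :: 'i \<Rightarrow> real.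
        (1 / real s \<le> \<bar>v k\<bar> \<and> \<bar>v k\<bar> \<le> real s \<and> (\<forall>j\<in>I. \<bar>v j\<bar> \<le> real s)) \<longrightarrow>
        (\<exists>t::real. - 1 / real n < t \<and> t < 1 / real n \<and>
           (let y = (\<lambda>j. \<theta> j + t * v j) in
              \<bar>u (expI I \<theta>) - u (expI I y)\<bar> > real n * Max ((\<lambda>j. \<bar>y j - \<theta> j\<bar>) ` I))))}"

definition phi_r :: "'i set \<Rightarrow> ('i \<Rightarrow> nat \<Rightarrow> complex \<Rightarrow> complex) \<Rightarrow> ('i \<Rightarrow> nat) \<Rightarrow> ('i \<Rightarrow> complex) \<Rightarrow> ('i \<Rightarrow> complex)" where
  "phi_r I \<phi> r z = (\<lambda>i\<in>I. \<phi> i (r i) (z i))"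

definition E_set ::
  "'i set \<Rightarrow> ('i \<Rightarrow> complex set) \<Rightarrow> ('i \<Rightarrow> nat \<Rightarrow> complex \<Rightarrow> complex) \<Rightarrow> ('i \<Rightarrow> nat)
   \<Rightarrow> nat \<Rightarrow> 'i \<Rightarrow> nat \<Rightarrow> (('i \<Rightarrow> complex) \<Rightarrow> complex) set" where
  "E_set I \<Omega> \<phi> r n k s =
     {f \<in> A_space I \<Omega>. (\<lambda>w. Re (f (phi_r I \<phi> r w))) \<in> D_set n k s I}"

end

theory Submission
  imports Defs
begin

text \<open>Write u for the real part of f \<circ> phi_r on the torus. Membership of u in D asks, for
  every point z and every admissible direction v, for some t in (-1/n, 1/n) at which the increment
  of u from z to its rotation by t v exceeds n times the sup norm of t v. For fixed t this excess is
  continuous in (z, v), which ranges over a compact set, so the excess can be kept above a uniform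
  \<delta> > 0. A function g within sup distance \<delta>/2 of f changes u by less than \<delta>/2 at each of the
  two points involved, so the strict inequality survives and g lies in E.\<close>

section \<open>Compactness and uniform lower bounds\<close>

lemma compact_PiE:
  assumes "\<And>i. i \<in> I \<Longrightarrow> compact (S i :: 'b::topological_space set)"
  shows "compact (Pi\<^sub>E I S)"
proof -
  define S' where "S' i = (if i \<in> I then S i else {undefined})" for i
  have "Pi\<^sub>E I S = Pi\<^sub>E UNIV S'"
    by (auto simp: S'_def PiE_iff extensional_def split: if_splits)
  moreover have "compactin (product_topology (\<lambda>i. euclidean) UNIV) (Pi\<^sub>E UNIV S')"
    by (subst compactin_PiE) (auto simp: S'_def assms)
  ultimately show ?thesis
    by (metis euclidean_product_topology compactin_euclidean_iff)
qed

lemma continuous_on_Max_image: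
  fixes f :: "'i \<Rightarrow> 'a::topological_space \<Rightarrow> real"
  assumes "finite I" "I \<noteq> {}" "\<And>j. j \<in> I \<Longrightarrow> continuous_on S (f j)"
  shows "continuous_on S (\<lambda>x. Max ((\<lambda>j. f j x) ` I))"
  using assms
proof (induction I rule: finite_ne_induct)
  case (singleton x)
  then show ?case by simp
next
  case (insert a F)
  then have "(\<lambda>x. Max ((\<lambda>j. f j x) ` insert a F)) = (\<lambda>x. max (f a x) (Max ((\<lambda>j. f j x) ` F)))"
    by auto
  then show ?case using insert by (auto intro!: continuous_intros)
qed

text \<open>Take a finite subcover of the sets where single members are positive; the maximum of those
  finitely many members is continuous and attains a positive minimum.\<close>

lemma compact_uniformly_positive_family:
  fixes G :: "'t \<Rightarrow> 'a::topological_space \<Rightarrow> real"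
  assumes "compact K" and cont: "\<And>t. t \<in> T \<Longrightarrow> continuous_on K (G t)"
    and pos: "\<And>p. p \<in> K \<Longrightarrow> \<exists>t\<in>T. G t p > 0"
  shows "\<exists>\<delta>>0. \<forall>p\<in>K. \<exists>t\<in>T. G t p \<ge> \<delta>"
proof -
  have "openin (top_of_set K) (K \<inter> G t -` {0<..})" if "t \<in> T" for t
    using continuous_openin_preimage_gen[OF cont[OF that]] by simp
  moreover have "K \<subseteq> \<Union>((\<lambda>t. K \<inter> G t -` {0<..}) ` T)"
    using pos by blast
  ultimately obtain D where D: "D \<subseteq> (\<lambda>t. K \<inter> G t -` {0<..}) ` T" "finite D" "K \<subseteq> \<Union>D"
    using \<open>compact K\<close> unfolding compact_eq_openin_cover by (metis (no_types, lifting) imageE)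
  then obtain T' where T': "T' \<subseteq> T" "finite T'" "K \<subseteq> (\<Union>t\<in>T'. K \<inter> G t -` {0<..})"
    using finite_subset_image[OF D(2,1)] by metis
  show ?thesis
  proof (cases "K = {}")
    case True
    then show ?thesis by (intro exI[of _ 1]) auto
  next
    case False
    then have "T' \<noteq> {}" using T'(3) by blast
    define M where "M p = Max ((\<lambda>t. G t p) ` T')" for p
    have "continuous_on K M"
      unfolding M_def using T' \<open>T' \<noteq> {}\<close> cont by (intro continuous_on_Max_image) auto
    then obtain p0 where p0: "p0 \<in> K" "\<And>p. p \<in> K \<Longrightarrow> M p0 \<le> M p"
      using continuous_attains_inf[OF \<open>compact K\<close> False] by blast
    have max_attained: "\<exists>t\<in>T'. G t p = M p" for p
    proof -
      have "M p \<in> (\<lambda>t. G t p) ` T'"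
        unfolding M_def using T'(2) \<open>T' \<noteq> {}\<close> by (intro Max_in) auto
      then show ?thesis by auto
    qed
    have "M p0 > 0"
    proof -
      obtain t where "t \<in> T'" "G t p0 > 0" using T'(3) p0(1) by blast
      then show ?thesis unfolding M_def using T'(2) by (meson Max_ge finite_imageI imageI less_le_trans)
    qed
    then show ?thesis
      using p0(2) max_attained T'(1) by (metis subsetD)
  qed
qed

section \<open>Boundary values of the Riemann maps\<close>

lemma inj_on_boundary_image_frontier:
  assumes "inj_on \<phi> S" "B \<subseteq> S" "x \<in> S - B"
    and "\<phi> ` B = - closure W" "\<phi> ` S = closure (- closure W)"
  shows "\<phi> x \<in> frontier W"
proof -
  have "\<phi> x \<notin> - closure W"
  proof
    assume "\<phi> x \<in> - closure W"
    then obtain y where "y \<in> B" "\<phi> x = \<phi> y"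
      using assms(4) by (metis imageE)
    then show False
      using inj_onD[OF assms(1)] assms(2,3) by blast
  qed
  moreover have "closure W \<inter> closure (- closure W) \<subseteq> frontier W"
    unfolding frontier_closures using closure_mono[of "- closure W" "- W"] closure_subset[of W]
    by auto
  ultimately show ?thesis
    using assms(3,5) by auto
qed

lemma riemann_map_ext_sphere:
  assumes "riemann_map_ext W \<phi>"
  shows "continuous_on (sphere 0 1) \<phi>" "\<phi> ` sphere 0 1 \<subseteq> frontier W"
proof -
  obtain S B where SB: "continuous_on S \<phi>" "inj_on \<phi> S" "B \<subseteq> S" "sphere 0 1 \<subseteq> S - B"
    "\<phi> ` B = - closure W" "\<phi> ` S = closure (- closure W)"
  proof (cases "bounded W")
    case True
    then obtain a where a: "a \<in> ball 0 1" and props: "continuous_on (cball 0 1 - {a}) \<phi>"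
      "inj_on \<phi> (cball 0 1 - {a})" "\<phi> ` (ball 0 1 - {a}) = - closure W"
      "\<phi> ` (cball 0 1 - {a}) = closure (- closure W)"
      using assms unfolding riemann_map_ext_def by auto
    have "sphere 0 1 \<subseteq> (cball 0 1 - {a}) - (ball 0 1 - {a})"
      using a by auto
    then show ?thesis by (rule that[OF props(1,2) _ _ props(3,4), rotated]) auto
  next
    case False
    then have props: "continuous_on (cball 0 1) \<phi>" "inj_on \<phi> (cball 0 1)"
      "\<phi> ` ball 0 1 = - closure W" "\<phi> ` cball 0 1 = closure (- closure W)"
      using assms unfolding riemann_map_ext_def by auto
    show ?thesis by (rule that[OF props(1,2) _ _ props(3,4)]) auto
  qed
  show "continuous_on (sphere 0 1) \<phi>"
    using continuous_on_subset[OF SB(1) subset_trans[OF SB(4) Diff_subset]] .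
  show "\<phi> ` sphere 0 1 \<subseteq> frontier W"
  proof (rule image_subsetI)
    fix x :: complex assume "x \<in> sphere 0 1"
    then show "\<phi> x \<in> frontier W"
      by (rule inj_on_boundary_image_frontier[OF SB(2,3) subsetD[OF SB(4)] SB(5,6)])
  qed
qed

lemma continuous_on_phi_r:
  assumes "setting I \<Omega> K V \<phi>" "\<forall>i\<in>I. r i < K i"
  shows "continuous_on (torus I) (phi_r I \<phi> r)" "phi_r I \<phi> r ` torus I \<subseteq> cl_prod I \<Omega>"
proof -
  have ph: "continuous_on (sphere 0 1) (\<phi> i (r i))" "\<phi> i (r i) ` sphere 0 1 \<subseteq> closure (\<Omega> i)"
    if i: "i \<in> I" for i
  proof -
    have st: "bij_betw (V i) {..<K i} (components (- closure (\<Omega> i)))"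
      "riemann_map_ext (V i (r i)) (\<phi> i (r i))"
      using assms i unfolding setting_def by auto
    then have "V i (r i) \<in> components (- closure (\<Omega> i))"
      using assms(2) i by (auto simp: bij_betw_def)
    then have "frontier (V i (r i)) \<subseteq> frontier (closure (\<Omega> i))"
      using frontier_of_components_subset by fastforce
    also have "\<dots> \<subseteq> closure (\<Omega> i)" by (simp add: frontier_def)
    finally show "\<phi> i (r i) ` sphere 0 1 \<subseteq> closure (\<Omega> i)"
      using riemann_map_ext_sphere(2)[OF st(2)] by blast
    show "continuous_on (sphere 0 1) (\<phi> i (r i))"
      using riemann_map_ext_sphere(1)[OF st(2)] .
  qed
  have "continuous_on (torus I) (\<lambda>z. phi_r I \<phi> r z i)" for i
  proof (cases "i \<in> I")
    case True
    have "continuous_on (torus I) (\<lambda>z. z i)"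
      by (rule continuous_on_subset[OF continuous_on_product_coordinates]) simp
    then have "continuous_on (torus I) (\<lambda>z. \<phi> i (r i) (z i))"
      by (rule continuous_on_compose2[OF ph(1)[OF True]]) (use True in \<open>auto simp: torus_def\<close>)
    then show ?thesis using True by (simp add: phi_r_def)
  qed (simp add: phi_r_def)
  then show "continuous_on (torus I) (phi_r I \<phi> r)"
    by (intro continuous_on_coordinatewise_then_product)
  show "phi_r I \<phi> r ` torus I \<subseteq> cl_prod I \<Omega>"
    using ph(2) by (fastforce simp: phi_r_def torus_def cl_prod_def)
qed

section \<open>The condition defining D on the torus\<close>

definition torus_rotate :: "'i set \<Rightarrow> real \<Rightarrow> ('i \<Rightarrow> real) \<Rightarrow> ('i \<Rightarrow> complex) \<Rightarrow> ('i \<Rightarrow> complex)" where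
  "torus_rotate I t v z = (\<lambda>j\<in>I. z j * exp (\<i> * complex_of_real (t * v j)))"

definition admissible_directions :: "'i set \<Rightarrow> 'i \<Rightarrow> nat \<Rightarrow> ('i \<Rightarrow> real) set" where
  "admissible_directions I k s =
     (\<Pi>\<^sub>E j\<in>I. if j = k then {x. 1 / real s \<le> \<bar>x\<bar> \<and> \<bar>x\<bar> \<le> real s} else cball 0 (real s))"

text \<open>In the notation of D: D_gap I n u t (e^{i\<theta>}, v) = |u(\<theta>) - u(\<theta> + t v)| - n \<parallel>t v\<parallel>, with the
  sup norm over I (see D_gap_expI).\<close>

definition D_gap ::
  "'i set \<Rightarrow> nat \<Rightarrow> (('i \<Rightarrow> complex) \<Rightarrow> real) \<Rightarrow> real \<Rightarrow> ('i \<Rightarrow> complex) \<times> ('i \<Rightarrow> real) \<Rightarrow> real" where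
  "D_gap I n u t p = \<bar>u (fst p) - u (torus_rotate I t (snd p) (fst p))\<bar>
     - real n * Max ((\<lambda>j. \<bar>t * snd p j\<bar>) ` I)"

lemma torus_rotate_in_torus: "z \<in> torus I \<Longrightarrow> torus_rotate I t v z \<in> torus I"
  by (auto simp: torus_rotate_def torus_def norm_mult)

lemma torus_eq_range_expI: "torus I = range (expI I)"
proof
  show "range (expI I) \<subseteq> torus I"
    by (auto simp: expI_def torus_def)
  show "torus I \<subseteq> range (expI I)"
  proof
    fix z assume z: "z \<in> torus I"
    have "expI I (\<lambda>j. Arg (z j)) j = z j" for j
    proof (cases "j \<in> I")
      case True
      then have "norm (z j) = 1" using z by (auto simp: torus_def)
      then have "z j \<noteq> 0" by auto
      then show ?thesis using Arg_eq[of "z j"] True \<open>norm (z j) = 1\<close> by (auto simp: expI_def)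
    qed (use z in \<open>auto simp: expI_def torus_def PiE_iff extensional_def\<close>)
    then show "z \<in> range (expI I)" by (metis ext rangeI)
  qed
qed

lemma D_gap_expI:
  "D_gap I n u t (expI I \<theta>, restrict v I) =
     \<bar>u (expI I \<theta>) - u (expI I (\<lambda>j. \<theta> j + t * v j))\<bar>
       - real n * Max ((\<lambda>j. \<bar>(\<theta> j + t * v j) - \<theta> j\<bar>) ` I)"
proof -
  have "torus_rotate I t (restrict v I) (expI I \<theta>) = expI I (\<lambda>j. \<theta> j + t * v j)"
    by (auto simp: torus_rotate_def expI_def distrib_left exp_add)
  moreover have "(\<lambda>j. \<bar>t * restrict v I j\<bar>) ` I = (\<lambda>j. \<bar>(\<theta> j + t * v j) - \<theta> j\<bar>) ` I"
    by auto
  ultimately show ?thesis by (simp add: D_gap_def)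
qed

lemma restrict_in_admissible_directions:
  assumes "k \<in> I"
  shows "restrict v I \<in> admissible_directions I k s \<longleftrightarrow>
    1 / real s \<le> \<bar>v k\<bar> \<and> \<bar>v k\<bar> \<le> real s \<and> (\<forall>j\<in>I. \<bar>v j\<bar> \<le> real s)"
  using assms by (auto simp: admissible_directions_def Pi_iff)

lemma D_set_iff_gap:
  assumes "k \<in> I"
  shows "u \<in> D_set n k s I \<longleftrightarrow> continuous_on (torus I) u \<and>
    (\<forall>z\<in>torus I. \<forall>v\<in>admissible_directions I k s.
       \<exists>t. - 1 / real n < t \<and> t < 1 / real n \<and> D_gap I n u t (z, v) > 0)"
proof -
  have "u \<in> D_set n k s I \<longleftrightarrow> continuous_on (torus I) u \<and>
    (\<forall>\<theta> v. restrict v I \<in> admissible_directions I k s \<longrightarrow>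
       (\<exists>t. - 1 / real n < t \<and> t < 1 / real n \<and> D_gap I n u t (expI I \<theta>, restrict v I) > 0))"
    unfolding D_set_def Let_def D_gap_expI restrict_in_admissible_directions[OF assms]
    by simp
  also have "\<dots> \<longleftrightarrow> continuous_on (torus I) u \<and>
    (\<forall>z\<in>torus I. \<forall>v\<in>admissible_directions I k s.
       \<exists>t. - 1 / real n < t \<and> t < 1 / real n \<and> D_gap I n u t (z, v) > 0)"
    unfolding torus_eq_range_expI
  proof (intro conj_cong refl iffI ballI allI impI)
    fix z v
    assume gap: "\<forall>\<theta> v. restrict v I \<in> admissible_directions I k s \<longrightarrow>
       (\<exists>t. - 1 / real n < t \<and> t < 1 / real n \<and> D_gap I n u t (expI I \<theta>, restrict v I) > 0)"
      and "z \<in> range (expI I)" and v: "v \<in> admissible_directions I k s"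
    then obtain \<theta> where "z = expI I \<theta>" by blast
    moreover have "restrict v I = v"
      using v by (auto simp: admissible_directions_def)
    ultimately show "\<exists>t. - 1 / real n < t \<and> t < 1 / real n \<and> D_gap I n u t (z, v) > 0"
      using gap[rule_format, of v \<theta>] v by simp
  qed auto
  finally show ?thesis .
qed

lemma compact_admissible_directions: "compact (admissible_directions I k s)"
  unfolding admissible_directions_def
proof (rule compact_PiE)
  have "compact {x::real. 1 / real s \<le> \<bar>x\<bar> \<and> \<bar>x\<bar> \<le> real s}"
  proof (rule compact_eq_bounded_closed[THEN iffD2], rule conjI)
    show "bounded {x::real. 1 / real s \<le> \<bar>x\<bar> \<and> \<bar>x\<bar> \<le> real s}"
      by (rule bounded_subset[of "cball 0 (real s)"]) auto
  qed (intro closed_Collect_conj closed_Collect_le continuous_intros)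
  then show "compact (if j = k then {x. 1 / real s \<le> \<bar>x\<bar> \<and> \<bar>x\<bar> \<le> real s} else cball 0 (real s))"
    for j by simp
qed

lemma continuous_on_torus_rotate:
  "continuous_on UNIV (\<lambda>p::('i \<Rightarrow> complex) \<times> ('i \<Rightarrow> real). torus_rotate I t (snd p) (fst p))"
proof (intro continuous_on_coordinatewise_then_product)
  fix j
  have "continuous_on UNIV (\<lambda>p::('i \<Rightarrow> complex) \<times> ('i \<Rightarrow> real). fst p j)"
    by (rule continuous_on_compose2[OF continuous_on_product_coordinates continuous_on_fst]) auto
  moreover have "continuous_on UNIV (\<lambda>p::('i \<Rightarrow> complex) \<times> ('i \<Rightarrow> real). snd p j)"
    by (rule continuous_on_compose2[OF continuous_on_product_coordinates continuous_on_snd]) auto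
  ultimately show "continuous_on UNIV (\<lambda>p::('i \<Rightarrow> complex) \<times> ('i \<Rightarrow> real). torus_rotate I t (snd p) (fst p) j)"
    by (cases "j \<in> I") (auto simp: torus_rotate_def intro!: continuous_intros)
qed

lemma continuous_on_D_gap:
  fixes I :: "'i set"
  assumes "finite I" "I \<noteq> {}" "continuous_on (torus I) u"
  shows "continuous_on (torus I \<times> UNIV) (D_gap I n u t)"
proof -
  have "continuous_on (torus I \<times> UNIV) (\<lambda>p. u (fst p))"
    by (rule continuous_on_compose2[OF assms(3) continuous_on_fst[OF continuous_on_id]]) auto
  moreover have "continuous_on (torus I \<times> UNIV) (\<lambda>p. u (torus_rotate I t (snd p) (fst p)))"
  proof (rule continuous_on_compose2[OF assms(3)])
    show "continuous_on (torus I \<times> UNIV) (\<lambda>p. torus_rotate I t (snd p) (fst p))"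
      by (rule continuous_on_subset[OF continuous_on_torus_rotate]) simp
  qed (auto simp: torus_rotate_in_torus)
  moreover have "continuous_on (torus I \<times> UNIV) (\<lambda>p. Max ((\<lambda>j. \<bar>t * snd p j\<bar>) ` I))"
  proof (rule continuous_on_Max_image[OF assms(1,2)])
    fix j
    have "continuous_on UNIV (\<lambda>p::('i \<Rightarrow> complex) \<times> ('i \<Rightarrow> real). snd p j)"
      by (rule continuous_on_compose2[OF continuous_on_product_coordinates continuous_on_snd]) auto
    then have "continuous_on (torus I \<times> (UNIV :: ('i \<Rightarrow> real) set)) (\<lambda>p. snd p j)"
      by (rule continuous_on_subset) simp
    then show "continuous_on (torus I \<times> UNIV) (\<lambda>p. \<bar>t * snd p j\<bar>)"
      by (intro continuous_on_rabs continuous_on_mult continuous_on_const)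
  qed
  ultimately show ?thesis
    unfolding D_gap_def
    by (intro continuous_on_diff continuous_on_rabs continuous_on_mult continuous_on_const)
qed

text \<open>D_gap is 1-Lipschitz in each of the two values of u it involves.\<close>

lemma D_set_of_uniform_gap:
  assumes "k \<in> I" "continuous_on (torus I) w" and close: "\<And>z. z \<in> torus I \<Longrightarrow> \<bar>u z - w z\<bar> < \<delta> / 2"
    and gap: "\<forall>p\<in>torus I \<times> admissible_directions I k s.
      \<exists>t\<in>{- 1 / real n<..<1 / real n}. D_gap I n u t p \<ge> \<delta>"
  shows "w \<in> D_set n k s I"
  unfolding D_set_iff_gap[OF assms(1)]
proof (intro conjI ballI assms(2))
  fix z v assume z: "z \<in> torus I" and "v \<in> admissible_directions I k s"
  then obtain t where "t \<in> {- 1 / real n<..<1 / real n}" and t: "D_gap I n u t (z, v) \<ge> \<delta>"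
    using gap by blast
  then have t_bounds: "- 1 / real n < t" "t < 1 / real n" by auto
  have "\<bar>u (torus_rotate I t v z) - w (torus_rotate I t v z)\<bar> < \<delta> / 2"
    using close torus_rotate_in_torus[OF z] by blast
  then have "D_gap I n w t (z, v) > 0"
    using t close[OF z] unfolding D_gap_def fst_conv snd_conv by linarith
  then show "\<exists>t. - 1 / real n < t \<and> t < 1 / real n \<and> D_gap I n w t (z, v) > 0"
    using t_bounds by blast
qed

lemma D_set_uniform_gap:
  assumes "finite I" "I \<noteq> {}" "k \<in> I" "u \<in> D_set n k s I"
  shows "\<exists>\<delta>>0. \<forall>p\<in>torus I \<times> admissible_directions I k s.
    \<exists>t\<in>{- 1 / real n<..<1 / real n}. D_gap I n u t p \<ge> \<delta>"
proof (rule compact_uniformly_positive_family)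
  have u_cont: "continuous_on (torus I) u"
    and u_gap: "\<forall>z\<in>torus I. \<forall>v\<in>admissible_directions I k s.
       \<exists>t. - 1 / real n < t \<and> t < 1 / real n \<and> D_gap I n u t (z, v) > 0"
    using assms(4) D_set_iff_gap[OF assms(3)] by blast+
  show "compact (torus I \<times> admissible_directions I k s)"
    unfolding torus_def by (intro compact_Times compact_PiE compact_admissible_directions) simp
  show "continuous_on (torus I \<times> admissible_directions I k s) (D_gap I n u t)" for t
    using continuous_on_D_gap[OF assms(1,2) u_cont] by (rule continuous_on_subset) auto
  show "\<exists>t\<in>{- 1 / real n<..<1 / real n}. D_gap I n u t p > 0"
    if "p \<in> torus I \<times> admissible_directions I k s" for p
    using u_gap that by fastforce
qed

section \<open>Stability under uniform perturbation\<close>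

lemma compact_cl_prod:
  assumes "setting I \<Omega> K V \<phi>"
  shows "compact (cl_prod I \<Omega>)"
  unfolding cl_prod_def
proof (rule compact_PiE)
  fix i assume "i \<in> I"
  then have "bounded (\<Omega> i)" using assms by (auto simp: setting_def jordan_domain_def)
  then show "compact (closure (\<Omega> i))" by (rule compact_closure[THEN iffD2])
qed

lemma norm_le_sup_dist:
  assumes "compact X" "continuous_on X f" "continuous_on X g" "x \<in> X"
  shows "cmod (f x - g x) \<le> sup_dist X f g"
proof -
  have "compact ((\<lambda>z. cmod (f z - g z)) ` X)"
    by (intro compact_continuous_image continuous_intros assms)
  then have "bdd_above ((\<lambda>z. cmod (f z - g z)) ` X)"
    by (intro bounded_imp_bdd_above compact_imp_bounded)
  then show ?thesis unfolding sup_dist_def by (rule cSUP_upper[OF assms(4)])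
qed

lemma abs_Re_diff_le_sup_dist:
  assumes "setting I \<Omega> K V \<phi>" "f \<in> A_space I \<Omega>" "g \<in> A_space I \<Omega>" "x \<in> cl_prod I \<Omega>"
  shows "\<bar>Re (f x) - Re (g x)\<bar> \<le> sup_dist (cl_prod I \<Omega>) f g"
proof -
  have "\<bar>Re (f x) - Re (g x)\<bar> \<le> cmod (f x - g x)"
    using abs_Re_le_cmod[of "f x - g x"] by simp
  also have "\<dots> \<le> sup_dist (cl_prod I \<Omega>) f g"
    by (rule norm_le_sup_dist[OF compact_cl_prod[OF assms(1)]])
      (use assms(2-4) in \<open>auto simp: A_space_def\<close>)
  finally show ?thesis .
qed

lemma E_set_of_uniform_gap:
  assumes "setting I \<Omega> K V \<phi>" "\<forall>i\<in>I. r i < K i" "k \<in> I"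
    and fA: "f \<in> A_space I \<Omega>" and gA: "g \<in> A_space I \<Omega>"
    and gap: "\<forall>p\<in>torus I \<times> admissible_directions I k s.
      \<exists>t\<in>{- 1 / real n<..<1 / real n}. D_gap I n (\<lambda>w. Re (f (phi_r I \<phi> r w))) t p \<ge> \<delta>"
    and close: "sup_dist (cl_prod I \<Omega>) f g < \<delta> / 2"
  shows "g \<in> E_set I \<Omega> \<phi> r n k s"
proof -
  note P = continuous_on_phi_r[OF assms(1,2)]
  have "(\<lambda>w. Re (g (phi_r I \<phi> r w))) \<in> D_set n k s I"
  proof (rule D_set_of_uniform_gap[OF \<open>k \<in> I\<close> _ _ gap])
    have "continuous_on (cl_prod I \<Omega>) g"
      using gA by (simp add: A_space_def)
    then show "continuous_on (torus I) (\<lambda>w. Re (g (phi_r I \<phi> r w)))"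
      by (intro continuous_intros continuous_on_compose2[OF _ P])
    show "\<bar>Re (f (phi_r I \<phi> r w)) - Re (g (phi_r I \<phi> r w))\<bar> < \<delta> / 2" if "w \<in> torus I" for w
    proof -
      have "phi_r I \<phi> r w \<in> cl_prod I \<Omega>"
        using P(2) that by blast
      then show ?thesis
        using abs_Re_diff_le_sup_dist[OF assms(1) fA gA] close by fastforce
    qed
  qed
  then show ?thesis
    using gA by (simp add: E_set_def)
qed

theorem lemma5p2:
  fixes I :: "'i set" and \<Omega> :: "'i \<Rightarrow> complex set" and K :: "'i \<Rightarrow> nat"
    and V :: "'i \<Rightarrow> nat \<Rightarrow> complex set" and \<phi> :: "'i \<Rightarrow> nat \<Rightarrow> complex \<Rightarrow> complex"
    and n s :: nat and k :: 'i and r :: "'i \<Rightarrow> nat"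
  assumes "finite I" and "I \<noteq> {}"
    and "setting I \<Omega> K V \<phi>"
    and "n \<ge> 1" and "s \<ge> 1" and "k \<in> I"
    and "\<forall>i\<in>I. r i < K i"
  shows "\<forall>f\<in>E_set I \<Omega> \<phi> r n k s. \<exists>\<epsilon>>0. \<forall>g\<in>A_space I \<Omega>.
           sup_dist (cl_prod I \<Omega>) f g < \<epsilon> \<longrightarrow> g \<in> E_set I \<Omega> \<phi> r n k s"
proof
  fix f assume "f \<in> E_set I \<Omega> \<phi> r n k s"
  then have fA: "f \<in> A_space I \<Omega>" and "(\<lambda>w. Re (f (phi_r I \<phi> r w))) \<in> D_set n k s I"
    by (auto simp: E_set_def)
  then obtain \<delta> where "\<delta> > 0" and gap: "\<forall>p\<in>torus I \<times> admissible_directions I k s.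
      \<exists>t\<in>{- 1 / real n<..<1 / real n}. D_gap I n (\<lambda>w. Re (f (phi_r I \<phi> r w))) t p \<ge> \<delta>"
    using D_set_uniform_gap[OF assms(1,2,6)] by blast
  have "\<forall>g\<in>A_space I \<Omega>. sup_dist (cl_prod I \<Omega>) f g < \<delta> / 2 \<longrightarrow> g \<in> E_set I \<Omega> \<phi> r n k s"
    using E_set_of_uniform_gap[OF assms(3,7,6) fA _ gap] by blast
  moreover have "\<delta> / 2 > 0"
    using \<open>\<delta> > 0\<close> by simp
  ultimately show "\<exists>\<epsilon>>0. \<forall>g\<in>A_space I \<Omega>. sup_dist (cl_prod I \<Omega>) f g < \<epsilon> \<longrightarrow> g \<in> E_set I \<Omega> \<phi> r n k s"
    by blast
qed

end
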